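(* Fix $\lambda \geqslant 0$ and let $g(\lambda) = (1-e^{-\lambda})/\lambda$ for $\lambda>0$, $g(0)=1$. For a compactly supported Borel probability measure $\rho$ on $\mathbb R$ with $\operatorname{supp}\rho \subset [0,+\infty)$ and $\langle \rho, x\rangle = \int x\,d\rho(x) \neq 0$, define the measure $$A(\rho) = \left(1 - g(\lambda) + g(\lambda)\frac{x}{\langle \rho, x\rangle}\right)\rho,$$ i.e. the measure with density $x \mapsto 1 - g(\lambda) + g(\lambda)x/\langle\rho,x\rangle$ with respect to $\rho$. Let $\rho_0$ be such a measure, let $\rho_t = A^t(\rho_0)$ for $t\in\mathbb N$, and let $x_0 = \sup\operatorname{supp}\rho_0$. Then $\rho_t \to \delta_{x_0}$ as $t \to +\infty$, in the sense that $\int\phi\,d\rho_t \to \phi(x_0)$ for every continuous compactly supported function $\phi\colon\mathbb R\to\mathbb R$.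
   Context: $\delta_a$ denotes the Dirac measure at $a$. Convergence of measures is the weak (vague) convergence against continuous compactly supported test functions. *)

theory Defs
  imports "HOL-Probability.Probability"
begin

definition gfun :: "real \<Rightarrow> real" where
  "gfun lam = (if lam = 0 then 1 else (1 - exp (- lam)) / lam)"

definition msupp :: "real measure \<Rightarrow> real set" where
  "msupp M = {x. \<forall>e>0. emeasure M (ball x e) > 0}"

definition mean :: "real measure \<Rightarrow> real" where
  "mean M = (\<integral>x. x \<partial>M)"

definition Aop :: "real \<Rightarrow> real measure \<Rightarrow> real measure" where
  "Aop lam M = density M (\<lambda>x. ennreal (1 - gfun lam + gfun lam * x / mean M))"

end

(*
  The density 1 - g + g x / <rho,x> exceeds 1 exactly to the right of the mean, and
  the mean of A(rho) is <rho,x> + g Var(rho) / <rho,x>. So the means of the iterates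
  increase to some m <= x0. If m < x0, then at every step the density is at least a
  fixed q > 1 on [x0 - delta, oo), so the mass of this set, positive at t = 0 because
  x0 lies in the support, would grow like q^t. Hence the means tend to x0. As every
  rho_t lives on [0, x0], the gap x0 - <rho_t,x> is the integral of |x0 - x|, and
  continuity of phi at x0 gives the convergence.
*)
theory Submission
  imports Defs
begin

lemma gfun_pos: "0 \<le> lam \<Longrightarrow> 0 < gfun lam"
  by (auto simp: gfun_def divide_pos_pos)

lemma gfun_le_1: "0 \<le> lam \<Longrightarrow> gfun lam \<le> 1"
  using exp_ge_add_one_self[of "- lam"] by (auto simp: gfun_def divide_le_eq)

lemma AE_in_msupp:
  fixes M :: "real measure"
  assumes "sets M = sets borel"
  shows "AE x in M. x \<in> msupp M"
proof -
  define \<F> where "\<F> = {ball x e | x e. emeasure M (ball x e) = 0}"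
  obtain \<F>' where \<F>': "\<F>' \<subseteq> \<F>" "countable \<F>'" "\<Union>\<F>' = \<Union>\<F>"
    using Lindelof[of \<F>] by (auto simp: \<F>_def)
  have "\<Union>\<F>' \<in> null_sets M"
  proof -
    have "\<And>S. S \<in> \<F>' \<Longrightarrow> S \<in> null_sets M"
      using \<F>'(1) assms by (auto simp: \<F>_def null_sets_def)
    then show ?thesis using null_sets_UN'[OF \<F>'(2), of id] by simp
  qed
  moreover have "- msupp M \<subseteq> \<Union>\<F>"
    unfolding msupp_def \<F>_def by (force simp: zero_less_iff_neq_zero)
  ultimately show ?thesis
    using \<F>' by (intro AE_I'[of "\<Union>\<F>'"]) auto
qed

lemma msupp_nonempty:
  fixes M :: "real measure"
  assumes "prob_space M" "sets M = sets borel"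
  shows "msupp M \<noteq> {}"
  using AE_in_msupp[OF assms(2)] prob_space.AE_False[OF assms(1)] by auto

definition Aop_density :: "real \<Rightarrow> real measure \<Rightarrow> real \<Rightarrow> real" where
  "Aop_density lam N x = 1 - gfun lam + gfun lam * x / mean N"

lemma Aop_eq_density: "Aop lam N = density N (\<lambda>x. ennreal (Aop_density lam N x))"
  by (simp add: Aop_def Aop_density_def)

locale nonneg_bounded_prob = prob_space N for N :: "real measure" +
  fixes b :: real
  assumes sets_N: "sets N = sets borel"
    and AE_bounds: "AE x in N. x \<in> {0..b}"
    and mean_pos: "0 < mean N"
begin

lemma measurable_N [simp]: "measurable N = measurable borel"
  by (intro ext measurable_cong_sets[OF sets_N refl])

lemma space_N [simp]: "space N = UNIV"
  using sets_eq_imp_space_eq[OF sets_N] by simp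

lemma prob_UNIV [simp]: "prob UNIV = 1"
  using prob_space by simp

lemma integrable_bounded:
  fixes f :: "real \<Rightarrow> real"
  assumes "f \<in> borel_measurable borel" "\<And>x. x \<in> {0..b} \<Longrightarrow> \<bar>f x\<bar> \<le> B"
  shows "integrable N f"
  using AE_bounds assms by (intro integrable_const_bound[where B=B]) auto

lemma integrable_id: "integrable N (\<lambda>x. x)"
  by (rule integrable_bounded[where B=b]) auto

lemma integrable_square: "integrable N (\<lambda>x. x\<^sup>2)"
  by (rule integrable_bounded[where B="b\<^sup>2"]) (auto intro: power_mono)

lemma Aop_density_nonneg: "0 \<le> lam \<Longrightarrow> 0 \<le> x \<Longrightarrow> 0 \<le> Aop_density lam N x"
  using gfun_pos[of lam] gfun_le_1[of lam] mean_pos by (simp add: Aop_density_def)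

lemma integrable_Aop_density: "integrable N (Aop_density lam N)"
  using integrable_id by (simp add: Aop_density_def[abs_def])

lemma integral_Aop_density: "(\<integral>x. Aop_density lam N x \<partial>N) = 1"
  using integrable_id mean_pos by (simp add: Aop_density_def mean_def prob_space)

lemma AE_Aop_density_nonneg: "0 \<le> lam \<Longrightarrow> AE x in N. 0 \<le> Aop_density lam N x"
  using AE_bounds by eventually_elim (simp add: Aop_density_nonneg)

lemma sets_Aop: "sets (Aop lam N) = sets borel"
  by (simp add: Aop_eq_density sets_N)

lemma integral_Aop:
  fixes f :: "real \<Rightarrow> real"
  assumes "0 \<le> lam" "f \<in> borel_measurable borel"
  shows "(\<integral>x. f x \<partial>Aop lam N) = (\<integral>x. Aop_density lam N x * f x \<partial>N)"
  unfolding Aop_eq_density using assms AE_Aop_density_nonneg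
  by (subst integral_density) (auto simp: Aop_density_def[abs_def])

lemma emeasure_Aop:
  assumes "S \<in> sets borel"
  shows "emeasure (Aop lam N) S = (\<integral>\<^sup>+x. ennreal (Aop_density lam N x) * indicator S x \<partial>N)"
  unfolding Aop_eq_density using assms
  by (subst emeasure_density) (auto simp: Aop_density_def[abs_def] sets_N)

lemma prob_space_Aop:
  assumes "0 \<le> lam"
  shows "prob_space (Aop lam N)"
proof
  have "emeasure (Aop lam N) (space (Aop lam N)) = (\<integral>\<^sup>+x. Aop_density lam N x \<partial>N)"
    using emeasure_Aop[of UNIV] sets_Aop by (simp add: sets_eq_imp_space_eq)
  also have "\<dots> = 1"
    using nn_integral_eq_integral[OF integrable_Aop_density AE_Aop_density_nonneg[OF assms]]
    by (simp add: integral_Aop_density)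
  finally show "emeasure (Aop lam N) (space (Aop lam N)) = 1" .
qed

lemma AE_Aop_bounds: "AE x in Aop lam N. x \<in> {0..b}"
  unfolding Aop_eq_density using AE_bounds
  by (subst AE_density) (auto simp: Aop_density_def[abs_def])

lemma mean_Aop:
  assumes "0 \<le> lam"
  shows "mean (Aop lam N) = mean N + gfun lam * variance (\<lambda>x. x) / mean N"
proof -
  have "mean (Aop lam N) = (\<integral>x. (1 - gfun lam) * x + gfun lam / mean N * x\<^sup>2 \<partial>N)"
    unfolding mean_def[of "Aop lam N"] using assms
    by (subst integral_Aop) (auto simp: Aop_density_def power2_eq_square field_simps)
  also have "\<dots> = (1 - gfun lam) * mean N + gfun lam / mean N * (\<integral>x. x\<^sup>2 \<partial>N)"
    using integrable_id integrable_square by (simp add: mean_def)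
  also have "\<dots> = mean N + gfun lam * variance (\<lambda>x. x) / mean N"
    using mean_pos integrable_id integrable_square
    by (simp add: variance_eq mean_def power2_eq_square field_simps)
  finally show ?thesis .
qed

lemma mean_le_mean_Aop: "0 \<le> lam \<Longrightarrow> mean N \<le> mean (Aop lam N)"
  using mean_Aop[of lam] gfun_pos[of lam] mean_pos variance_positive[of "\<lambda>x. x"] by simp

lemma nonneg_bounded_prob_Aop:
  assumes "0 \<le> lam"
  shows "nonneg_bounded_prob (Aop lam N) b"
proof -
  interpret A: prob_space "Aop lam N" using prob_space_Aop[OF assms] .
  show ?thesis
    using sets_Aop AE_Aop_bounds mean_pos mean_le_mean_Aop[OF assms]
    by unfold_locales auto
qed

lemma mean_le: "mean N \<le> b"
proof -
  have "mean N \<le> (\<integral>x. b \<partial>N)"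
    unfolding mean_def using AE_bounds
    by (intro integral_mono_AE integrable_id) auto
  then show ?thesis by (simp add: prob_space)
qed

lemma measure_Aop_ge:
  assumes "0 \<le> lam" "S \<in> sets borel" "0 \<le> q"
    and "\<And>x. x \<in> S \<inter> {0..b} \<Longrightarrow> q \<le> Aop_density lam N x"
  shows "q * measure N S \<le> measure (Aop lam N) S"
proof -
  interpret A: prob_space "Aop lam N" using prob_space_Aop[OF assms(1)] .
  have "ennreal q * emeasure N S = (\<integral>\<^sup>+x. ennreal q * indicator S x \<partial>N)"
    using assms(2) by (simp add: nn_integral_cmult_indicator sets_N)
  also have "\<dots> \<le> (\<integral>\<^sup>+x. ennreal (Aop_density lam N x) * indicator S x \<partial>N)"
    using AE_bounds
    by (intro nn_integral_mono_AE, eventually_elim) (auto split: split_indicator intro!: ennreal_leI assms(4))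
  also have "\<dots> = emeasure (Aop lam N) S"
    using emeasure_Aop[OF assms(2)] by simp
  finally show ?thesis
    using assms(3) by (simp add: emeasure_eq_measure A.emeasure_eq_measure ennreal_mult[symmetric])
qed

end

lemma nonneg_bounded_prob_iterate:
  assumes "nonneg_bounded_prob N b" "0 \<le> lam"
  shows "nonneg_bounded_prob ((Aop lam ^^ t) N) b"
  by (induction t) (auto intro: assms nonneg_bounded_prob.nonneg_bounded_prob_Aop)

lemma incseq_mean_iterate:
  assumes "nonneg_bounded_prob N b" "0 \<le> lam"
  shows "incseq (\<lambda>t. mean ((Aop lam ^^ t) N))"
  using nonneg_bounded_prob.mean_le_mean_Aop[OF nonneg_bounded_prob_iterate[OF assms]] assms(2)
  by (intro incseq_SucI) simp

lemma Aop_density_ge: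
  assumes "0 \<le> lam" "0 < mean N" "mean N \<le> b" "0 \<le> \<delta>" "mean N + \<delta> \<le> x"
  shows "1 + gfun lam * \<delta> / b \<le> Aop_density lam N x"
proof -
  have "1 + \<delta> / b \<le> 1 + \<delta> / mean N"
    using assms by (simp add: frac_le)
  also have "\<dots> = (mean N + \<delta>) / mean N"
    using assms(2) by (simp add: field_simps)
  also have "\<dots> \<le> x / mean N"
    using assms by (simp add: divide_right_mono)
  finally have "gfun lam * (1 + \<delta> / b) \<le> gfun lam * (x / mean N)"
    using gfun_pos[OF assms(1)] by (intro mult_left_mono) auto
  then show ?thesis by (simp add: Aop_density_def algebra_simps)
qed

lemma measure_iterate_ge_power:
  assumes N: "nonneg_bounded_prob N b" and lam: "0 \<le> lam" and "0 \<le> \<delta>"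
    and gap: "\<And>t. mean ((Aop lam ^^ t) N) + \<delta> \<le> c"
  shows "(1 + gfun lam * \<delta> / b) ^ t * measure N {c..} \<le> measure ((Aop lam ^^ t) N) {c..}"
proof (induction t)
  case (Suc t)
  define q where "q = 1 + gfun lam * \<delta> / b"
  interpret nonneg_bounded_prob "(Aop lam ^^ t) N" b
    using nonneg_bounded_prob_iterate[OF N lam] .
  have "0 \<le> q"
    using \<open>0 \<le> \<delta>\<close> gfun_pos[OF lam] mean_pos mean_le by (simp add: q_def)
  have "q \<le> Aop_density lam ((Aop lam ^^ t) N) x" if "x \<in> {c..}" for x
    unfolding q_def using that gap[of t] \<open>0 \<le> \<delta>\<close>
    by (intro Aop_density_ge[OF lam mean_pos mean_le]) auto
  then have "q * measure ((Aop lam ^^ t) N) {c..} \<le> measure ((Aop lam ^^ Suc t) N) {c..}"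
    unfolding funpow.simps o_apply by (intro measure_Aop_ge[OF lam _ \<open>0 \<le> q\<close>]) auto
  moreover have "q ^ Suc t * measure N {c..} \<le> q * measure ((Aop lam ^^ t) N) {c..}"
    using Suc \<open>0 \<le> q\<close> unfolding q_def[symmetric] by (simp add: mult.assoc mult_left_mono)
  ultimately show ?case
    unfolding q_def by linarith
qed simp

lemma mean_iterate_tendsto:
  assumes N: "nonneg_bounded_prob N b" and lam: "0 \<le> lam" and b: "b \<in> msupp N"
  shows "(\<lambda>t. mean ((Aop lam ^^ t) N)) \<longlonglongrightarrow> b"
proof -
  interpret nonneg_bounded_prob N b by (rule N)
  define M where "M t = (Aop lam ^^ t) N" for t
  have M: "nonneg_bounded_prob (M t) b" for t
    unfolding M_def using nonneg_bounded_prob_iterate[OF N lam] .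
  have mean_le_b: "mean (M t) \<le> b" for t
    using nonneg_bounded_prob.mean_le[OF M] .
  define m where "m = (SUP t. mean (M t))"
  have bdd: "bdd_above (range (\<lambda>t. mean (M t)))"
    using mean_le_b by (intro bdd_aboveI) auto
  have lim: "(\<lambda>t. mean (M t)) \<longlonglongrightarrow> m"
    unfolding m_def M_def using incseq_mean_iterate[OF N lam] bdd
    by (intro LIMSEQ_incseq_SUP) (auto simp: M_def)
  have le_m: "mean (M t) \<le> m" for t
    unfolding m_def using bdd by (rule cSUP_upper[OF UNIV_I])
  have "\<not> m < b"
  proof
    assume "m < b"
    define \<delta> where "\<delta> = (b - m) / 2"
    have \<delta>: "0 < \<delta>" "\<And>t. mean (M t) + \<delta> \<le> b - \<delta>"
      using \<open>m < b\<close> le_m by (auto simp: \<delta>_def field_simps)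
    have q: "1 < 1 + gfun lam * \<delta> / b"
      using \<delta> mean_pos mean_le gfun_pos[OF lam] by simp
    have "0 < emeasure N (ball b \<delta>)"
      using b \<delta> by (simp add: msupp_def)
    also have "\<dots> \<le> emeasure N {b - \<delta>..}"
      by (intro emeasure_mono) (auto simp: dist_real_def sets_N)
    finally have "0 < measure N {b - \<delta>..}"
      by (simp add: emeasure_eq_measure)
    moreover obtain t where "1 / measure N {b - \<delta>..} < (1 + gfun lam * \<delta> / b) ^ t"
      using real_arch_pow[OF q] by blast
    moreover have "measure (M t) {b - \<delta>..} \<le> 1"
      using prob_space.prob_le_1[OF nonneg_bounded_prob.axioms(1)[OF M]] .
    ultimately show False
      using measure_iterate_ge_power[OF N lam less_imp_le[OF \<delta>(1)] \<delta>(2)[unfolded M_def], of t]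
      by (simp add: M_def divide_less_eq)
  qed
  moreover have "m \<le> b"
    using lim mean_le_b by (intro LIMSEQ_le_const2[OF lim]) auto
  ultimately show ?thesis
    using lim by (simp add: M_def)
qed

lemma continuous_on_bounded_by_linear_near:
  fixes \<phi> :: "real \<Rightarrow> real"
  assumes "continuous_on {a..b} \<phi>" "b \<in> {a..b}" "0 < \<eta>"
  obtains K where "\<And>x. x \<in> {a..b} \<Longrightarrow> \<bar>\<phi> x - \<phi> b\<bar> \<le> \<eta> + K * (b - x)"
proof -
  obtain B where B: "\<And>x. x \<in> {a..b} \<Longrightarrow> \<bar>\<phi> x\<bar> \<le> B"
    using compact_imp_bounded[OF compact_continuous_image[OF assms(1) compact_Icc]]
    by (fastforce simp: bounded_iff)
  obtain \<delta> where \<delta>: "0 < \<delta>" and near: "\<And>x. x \<in> {a..b} \<Longrightarrow> \<bar>x - b\<bar> < \<delta> \<Longrightarrow> \<bar>\<phi> x - \<phi> b\<bar> < \<eta>"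
    using assms unfolding continuous_on_iff dist_real_def by blast
  have "\<bar>\<phi> x - \<phi> b\<bar> \<le> \<eta> + 2 * B / \<delta> * (b - x)" if x: "x \<in> {a..b}" for x
  proof (cases "b - x < \<delta>")
    case True
    have "0 \<le> 2 * B / \<delta> * (b - x)"
      using x B[OF x] \<delta> by (intro mult_nonneg_nonneg divide_nonneg_pos) auto
    then show ?thesis
      using near[OF x] True x by simp
  next
    case False
    then have "1 \<le> (b - x) / \<delta>"
      using \<delta> by simp
    then have "2 * B * 1 \<le> 2 * B * ((b - x) / \<delta>)"
      using B[OF x] by (intro mult_left_mono) auto
    then have "2 * B \<le> 2 * B / \<delta> * (b - x)"
      by simp
    then show ?thesis
      using B[OF x] B[OF assms(2)] assms(3) by linarith
  qed
  then show ?thesis using that by blast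
qed

lemma integral_dist_le_mean_dist:
  fixes M :: "real measure" and \<phi> :: "real \<Rightarrow> real"
  assumes "prob_space M" "sets M = sets borel" "AE x in M. x \<in> {a..b}"
    and "\<phi> \<in> borel_measurable borel"
    and bound: "\<And>x. x \<in> {a..b} \<Longrightarrow> \<bar>\<phi> x - \<phi> b\<bar> \<le> \<eta> + K * (b - x)"
  shows "\<bar>(\<integral>x. \<phi> x \<partial>M) - \<phi> b\<bar> \<le> \<eta> + K * (b - mean M)"
proof -
  interpret prob_space M by fact
  have integrable: "integrable M f"
    if "f \<in> borel_measurable borel" "\<And>x. x \<in> {a..b} \<Longrightarrow> \<bar>f x\<bar> \<le> C" for f :: "real \<Rightarrow> real" and C
    using that assms(3) measurable_cong_sets[OF assms(2) refl]
    by (intro integrable_const_bound[where B=C]) auto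
  have "\<bar>\<phi> x\<bar> \<le> \<bar>\<phi> b\<bar> + \<eta> + \<bar>K\<bar> * (b - a)" if "x \<in> {a..b}" for x
  proof -
    have "K * (b - x) \<le> \<bar>K\<bar> * (b - x)"
      using that by (intro mult_right_mono) auto
    also have "\<dots> \<le> \<bar>K\<bar> * (b - a)"
      using that by (intro mult_left_mono) auto
    finally have "K * (b - x) \<le> \<bar>K\<bar> * (b - a)" .
    then show ?thesis using bound[OF that] by linarith
  qed
  then have int_\<phi>: "integrable M \<phi>"
    using assms(4) by (rule integrable[rotated])
  have int_id: "integrable M (\<lambda>x. x)"
    by (rule integrable[of _ "\<bar>a\<bar> + \<bar>b\<bar>"]) auto
  have "\<bar>(\<integral>x. \<phi> x \<partial>M) - \<phi> b\<bar> = \<bar>\<integral>x. \<phi> x - \<phi> b \<partial>M\<bar>"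
    using int_\<phi> by (simp add: prob_space)
  also have "\<dots> \<le> (\<integral>x. \<bar>\<phi> x - \<phi> b\<bar> \<partial>M)"
    using integral_norm_bound[of M "\<lambda>x. \<phi> x - \<phi> b"] by simp
  also have "\<dots> \<le> (\<integral>x. \<eta> + K * (b - x) \<partial>M)"
  proof (rule integral_mono_AE)
    show "integrable M (\<lambda>x. \<bar>\<phi> x - \<phi> b\<bar>)"
      using int_\<phi> by simp
    show "integrable M (\<lambda>x. \<eta> + K * (b - x))"
      using int_id by simp
    show "AE x in M. \<bar>\<phi> x - \<phi> b\<bar> \<le> \<eta> + K * (b - x)"
      using assms(3) by eventually_elim (rule bound)
  qed
  also have "\<dots> = \<eta> + K * (b - mean M)"
    using int_id by (simp add: mean_def prob_space algebra_simps)
  finally show ?thesis .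
qed

lemma tendsto_integral_if_mean_tendsto_upper_bound:
  fixes M :: "nat \<Rightarrow> real measure" and \<phi> :: "real \<Rightarrow> real"
  assumes "\<And>t. prob_space (M t)" "\<And>t. sets (M t) = sets borel" "\<And>t. AE x in M t. x \<in> {a..b}"
    and "a \<le> b" "(\<lambda>t. mean (M t)) \<longlonglongrightarrow> b" "continuous_on UNIV \<phi>"
  shows "(\<lambda>t. \<integral>x. \<phi> x \<partial>M t) \<longlonglongrightarrow> \<phi> b"
proof (rule LIMSEQ_I)
  fix \<eta> :: real
  assume "0 < \<eta>"
  then obtain K where K: "\<And>x. x \<in> {a..b} \<Longrightarrow> \<bar>\<phi> x - \<phi> b\<bar> \<le> \<eta> / 2 + K * (b - x)"
    using continuous_on_bounded_by_linear_near[OF continuous_on_subset[OF assms(6)], of a b "\<eta> / 2"] assms(4)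
    by auto
  have "(\<lambda>t. K * (b - mean (M t))) \<longlonglongrightarrow> K * (b - b)"
    by (intro tendsto_intros assms(5))
  then have "eventually (\<lambda>t. K * (b - mean (M t)) < \<eta> / 2) sequentially"
    using \<open>0 < \<eta>\<close> by (intro order_tendstoD(2)) auto
  then obtain T where T: "\<And>t. T \<le> t \<Longrightarrow> K * (b - mean (M t)) < \<eta> / 2"
    by (auto simp: eventually_sequentially)
  have bound: "\<bar>(\<integral>x. \<phi> x \<partial>M t) - \<phi> b\<bar> \<le> \<eta> / 2 + K * (b - mean (M t))" for t
    by (rule integral_dist_le_mean_dist[OF assms(1-3) borel_measurable_continuous_onI[OF assms(6)] K])
  have "\<bar>(\<integral>x. \<phi> x \<partial>M t) - \<phi> b\<bar> < \<eta>" if "T \<le> t" for t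
    using bound[of t] T[OF that] by linarith
  then show "\<exists>T. \<forall>t\<ge>T. norm ((\<integral>x. \<phi> x \<partial>M t) - \<phi> b) < \<eta>"
    by auto
qed

lemma nonneg_bounded_prob_Sup_msupp:
  fixes \<rho> :: "real measure"
  assumes "prob_space \<rho>" "sets \<rho> = sets borel" "compact (msupp \<rho>)" "msupp \<rho> \<subseteq> {0..}"
    and "mean \<rho> \<noteq> 0"
  shows "nonneg_bounded_prob \<rho> (Sup (msupp \<rho>))" "Sup (msupp \<rho>) \<in> msupp \<rho>"
proof -
  have bdd: "bdd_above (msupp \<rho>)"
    using assms(3) by (simp add: compact_imp_bounded bounded_imp_bdd_above)
  show "Sup (msupp \<rho>) \<in> msupp \<rho>"
    using msupp_nonempty[OF assms(1,2)] bdd assms(3)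
    by (intro closed_contains_Sup) (auto simp: compact_imp_closed)
  have "msupp \<rho> \<subseteq> {0..Sup (msupp \<rho>)}"
    using assms(4) bdd by (auto intro: cSup_upper)
  then have AE: "AE x in \<rho>. x \<in> {0..Sup (msupp \<rho>)}"
    using AE_in_msupp[OF assms(2)] by (elim eventually_mono) auto
  have "0 \<le> mean \<rho>"
    unfolding mean_def using AE by (intro integral_nonneg_AE) auto
  then show "nonneg_bounded_prob \<rho> (Sup (msupp \<rho>))"
    using assms(1,2,5) AE by (simp add: nonneg_bounded_prob_def nonneg_bounded_prob_axioms_def)
qed

theorem mainTheorem3:
  fixes lam :: real and \<rho>0 :: "real measure"
  assumes "lam \<ge> 0"
    and "prob_space \<rho>0"
    and "sets \<rho>0 = sets borel"
    and "compact (msupp \<rho>0)"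
    and "msupp \<rho>0 \<subseteq> {0..}"
    and "mean \<rho>0 \<noteq> 0"
  shows "\<forall>\<phi> :: real \<Rightarrow> real. continuous_on UNIV \<phi> \<and> (\<exists>K. compact K \<and> (\<forall>x. x \<notin> K \<longrightarrow> \<phi> x = 0)) \<longrightarrow>
           (\<lambda>t. \<integral>x. \<phi> x \<partial>((Aop lam ^^ t) \<rho>0)) \<longlonglongrightarrow> \<phi> (Sup (msupp \<rho>0))"
proof -
  note \<rho>0 = nonneg_bounded_prob_Sup_msupp[OF assms(2-6)]
  have iterates: "prob_space ((Aop lam ^^ t) \<rho>0)" "sets ((Aop lam ^^ t) \<rho>0) = sets borel"
    "AE x in (Aop lam ^^ t) \<rho>0. x \<in> {0..Sup (msupp \<rho>0)}" for t
    using nonneg_bounded_prob_iterate[OF \<rho>0(1) assms(1), of t]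
    by (simp_all add: nonneg_bounded_prob_def nonneg_bounded_prob_axioms_def)
  have "0 \<le> Sup (msupp \<rho>0)"
    using \<rho>0(2) assms(5) by auto
  then show ?thesis
    using tendsto_integral_if_mean_tendsto_upper_bound[OF iterates _ mean_iterate_tendsto[OF \<rho>0(1) assms(1) \<rho>0(2)]]
    by blast
qed

end
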